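(* For all $x,y,z\in\mathbb{C}^{n\times r}$, $$\|x-y\|_2\|x+y\|_2\leq\|x-z\|_2\|x+z\|_2+\|z-y\|_2\|z+y\|_2.$$
   Context: $\|\cdot\|_2$ denotes the Frobenius norm. *)

theory Defs
  imports "HOL-Analysis.Analysis"
begin

definition frob_norm :: "complex ^ 'r ^ 'n \<Rightarrow> real" where
  "frob_norm A = sqrt (\<Sum>i\<in>UNIV. \<Sum>j\<in>UNIV. (cmod (A $ i $ j))\<^sup>2)"

end

theory Submission
  imports Defs
begin

text \<open>
  Let \<open>W\<close> be a linear isometry that is self-adjoint with respect to the real inner product.
  Self-adjointness gives \<open>(a - c) \<bullet> W (a + c) = a \<bullet> W a - c \<bullet> W c\<close>, and Cauchy-Schwarz bounds
  this by \<open>\<parallel>a - c\<parallel> \<parallel>a + c\<parallel>\<close>. Choosing for \<open>W\<close> the reflection that maps the direction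
  of \<open>x + y\<close> to that of \<open>x - y\<close>, the left-hand side equals \<open>x \<bullet> W x - y \<bullet> W y\<close>, which
  telescopes through \<open>z \<bullet> W z\<close>. The Frobenius norm is the Euclidean norm of the
  underlying real inner product space, so the theorem is an instance.
\<close>

definition reflection :: "'a::real_inner \<Rightarrow> 'a \<Rightarrow> 'a" where
  "reflection w t = t - (2 * (w \<bullet> t) / (w \<bullet> w)) *\<^sub>R w"

lemma reflection_zero [simp]: "reflection 0 t = t"
  by (simp add: reflection_def)

lemma norm_reflection [simp]: "norm (reflection w t) = norm t"
proof (cases "w = 0")
  case False
  then have "(norm (reflection w t))\<^sup>2 = (norm t)\<^sup>2"
    unfolding reflection_def power2_norm_eq_inner
    by (simp add: inner_simps inner_commute field_simps power2_eq_square)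
  then show ?thesis by (simp add: power2_eq_iff_nonneg)
qed simp

lemma reflection_scaleR: "reflection w (r *\<^sub>R t) = r *\<^sub>R reflection w t"
  unfolding reflection_def by (simp add: inner_simps algebra_simps)

lemma inner_diff_reflection_add:
  "(a - c) \<bullet> reflection w (a + c) = a \<bullet> reflection w a - c \<bullet> reflection w c"
  unfolding reflection_def
  by (simp add: inner_simps inner_commute algebra_simps add_divide_distrib diff_divide_distrib)

lemma reflection_quadratic_diff_le:
  "a \<bullet> reflection w a - c \<bullet> reflection w c \<le> norm (a - c) * norm (a + c)"
  using norm_cauchy_schwarz[of "a - c" "reflection w (a + c)"]
  by (simp add: inner_diff_reflection_add)

lemma reflection_swaps_unit_vectors:
  assumes "norm e = 1" "norm f = 1"
  shows "reflection (e - f) e = f"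
proof (cases "e = f")
  case False
  have "e \<bullet> e = 1" "f \<bullet> f = 1"
    using assms by (simp_all add: norm_eq_1)
  then have "(e - f) \<bullet> (e - f) = 2 * ((e - f) \<bullet> e)"
    by (simp add: inner_simps inner_commute)
  moreover have "(e - f) \<bullet> (e - f) \<noteq> 0"
    using False by simp
  ultimately show ?thesis
    by (simp add: reflection_def)
qed (simp add: reflection_def)

lemma reflection_aligns:
  fixes u v :: "'a::real_inner"
  obtains w where "u \<bullet> reflection w v = norm u * norm v"
proof (cases "u = 0 \<or> v = 0")
  case True
  then show ?thesis
    using that[of 0] by auto
next
  case False
  define e where "e = (1 / norm v) *\<^sub>R v"
  define f where "f = (1 / norm u) *\<^sub>R u"
  have "norm e = 1" "norm f = 1"
    using False by (simp_all add: e_def f_def)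
  then have "reflection (e - f) e = f"
    by (rule reflection_swaps_unit_vectors)
  moreover have "v = norm v *\<^sub>R e"
    using False by (simp add: e_def)
  ultimately have "reflection (e - f) v = norm v *\<^sub>R f"
    by (metis reflection_scaleR)
  moreover have "u \<bullet> f = norm u"
    using False by (simp add: f_def dot_square_norm power2_eq_square)
  ultimately show ?thesis
    using that[of "e - f"] by (simp add: mult.commute)
qed

lemma norm_diff_mult_norm_add_triangle:
  fixes x y z :: "'a::real_inner"
  shows "norm (x - y) * norm (x + y)
           \<le> norm (x - z) * norm (x + z) + norm (z - y) * norm (z + y)"
proof -
  obtain w where w: "(x - y) \<bullet> reflection w (x + y) = norm (x - y) * norm (x + y)"
    by (rule reflection_aligns)
  let ?q = "\<lambda>a. a \<bullet> reflection w a"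
  have "norm (x - y) * norm (x + y) = (?q x - ?q z) + (?q z - ?q y)"
    using w by (simp add: inner_diff_reflection_add)
  also have "\<dots> \<le> norm (x - z) * norm (x + z) + norm (z - y) * norm (z + y)"
    using reflection_quadratic_diff_le[of x w z] reflection_quadratic_diff_le[of z w y]
    by linarith
  finally show ?thesis .
qed

lemma frob_norm_eq_norm: "frob_norm A = norm A"
  unfolding frob_norm_def norm_vec_def L2_set_def
  by (simp add: real_sqrt_pow2 sum_nonneg)

theorem lemmaA1:
  fixes x y z :: "complex ^ 'r ^ 'n"
  shows "frob_norm (x - y) * frob_norm (x + y)
           \<le> frob_norm (x - z) * frob_norm (x + z) + frob_norm (z - y) * frob_norm (z + y)"
  unfolding frob_norm_eq_norm by (rule norm_diff_mult_norm_add_triangle)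

end
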